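(* Let $X$ be a real Hilbert space, let $\alpha\in\mathbb{R}\setminus\{0\}$ and $\beta>0$, equip $X\times X\times\mathbb{R}$ with the norm $\|(u,v,\gamma)\|=\sqrt{\|u\|^2+\|v\|^2+\beta^2|\gamma|^2}$, and let $$\widetilde{C}_\alpha=\{(u,v,\gamma)\in X\times X\times\mathbb{R} : \|u\|^2-\|v\|^2=2\alpha\gamma\}.$$ Let $(u_0,v_0,\gamma_0)\in X\times X\times\mathbb{R}$. Then the following hold. (i) If $u_0\neq 0$ and $v_0\neq 0$, then $$P_{\widetilde{C}_\alpha}(u_0,v_0,\gamma_0)=\Big\{\Big(\frac{u_0}{1+\lambda},\frac{v_0}{1-\lambda},\gamma_0+\frac{\lambda\alpha}{\beta^2}\Big)\Big\},$$ where $\lambda$ is the unique solution in $]-1,1[$ of $$g(\lambda):=\frac{(\lambda^2+1)p-2\lambda q}{(1-\lambda^2)^2}-\frac{2\lambda\alpha^2}{\beta^2}-2\alpha\gamma_0=0,$$ with $p:=\|u_0\|^2-\|v_0\|^2$ and $q:=\|u_0\|^2+\|v_0\|^2$. (ii) If $u_0=0$ and $v_0\neq 0$: (a) if $\alpha(\gamma_0-\frac{\alpha}{\beta^2})<-\frac{\|v_0\|^2}{8}$, then $P_{\widetilde{C}_\alpha}(0,v_0,\gamma_0)=\{(0,\frac{v_0}{1-\lambda},\gamma_0+\frac{\lambda\alpha}{\beta^2})\}$ for the unique $\lambda\in]-1,1[$ solving $g_1(\lambda):=\frac{\|v_0\|^2}{(1-\lambda)^2}+\frac{2\lambda\alpha^2}{\beta^2}+2\alpha\gamma_0=0$;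 (b) if $\alpha(\gamma_0-\frac{\alpha}{\beta^2})\geq-\frac{\|v_0\|^2}{8}$, then $$P_{\widetilde{C}_\alpha}(0,v_0,\gamma_0)=\Big\{\Big(u,\frac{v_0}{2},\gamma_0-\frac{\alpha}{\beta^2}\Big): u\in X,\ \|u\|=\sqrt{2\alpha\big(\gamma_0-\tfrac{\alpha}{\beta^2}\big)+\tfrac{\|v_0\|^2}{4}}\Big\},$$ which is a singleton if and only if $\alpha(\gamma_0-\frac{\alpha}{\beta^2})=-\frac{\|v_0\|^2}{8}$. (iii) If $u_0\neq 0$ and $v_0=0$: (a) if $\alpha(\gamma_0+\frac{\alpha}{\beta^2})>\frac{\|u_0\|^2}{8}$, then $P_{\widetilde{C}_\alpha}(u_0,0,\gamma_0)=\{(\frac{u_0}{1+\lambda},0,\gamma_0+\frac{\lambda\alpha}{\beta^2})\}$ for the unique $\lambda\in]-1,1[$ solving $g_2(\lambda):=\frac{\|u_0\|^2}{(1+\lambda)^2}-\frac{2\lambda\alpha^2}{\beta^2}-2\alpha\gamma_0=0$; (b) if $\alpha(\gamma_0+\frac{\alpha}{\beta^2})\leq\frac{\|u_0\|^2}{8}$, then $$P_{\widetilde{C}_\alpha}(u_0,0,\gamma_0)=\Big\{\Big(\frac{u_0}{2},v,\gamma_0+\frac{\alpha}{\beta^2}\Big): v\in X,\ \|v\|=\sqrt{-2\alpha\big(\gamma_0+\tfrac{\alpha}{\beta^2}\big)+\tfrac{\|u_0\|^2}{4}}\Big\},$$ which is a singleton if and only if $\alpha(\gamma_0+\frac{\alpha}{\beta^2})=\frac{\|u_0\|^2}{8}$.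 (iv) If $u_0=0$ and $v_0=0$: (a) if $\alpha\gamma_0>\frac{\alpha^2}{\beta^2}$, then $P_{\widetilde{C}_\alpha}(0,0,\gamma_0)$ is the non-singleton set $\{(u,0,\gamma_0-\frac{\alpha}{\beta^2}): u\in X,\ \|u\|=\sqrt{2\alpha(\gamma_0-\frac{\alpha}{\beta^2})}\}$; (b) if $|\alpha\gamma_0|\leq\frac{\alpha^2}{\beta^2}$, then $P_{\widetilde{C}_\alpha}(0,0,\gamma_0)=\{(0,0,0)\}$; (c) if $\alpha\gamma_0<-\frac{\alpha^2}{\beta^2}$, then $P_{\widetilde{C}_\alpha}(0,0,\gamma_0)$ is the non-singleton set $\{(0,v,\gamma_0+\frac{\alpha}{\beta^2}): v\in X,\ \|v\|=\sqrt{-2\alpha(\gamma_0+\frac{\alpha}{\beta^2})}\}$.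
   Context: For a nonempty set $S\subseteq X\times X\times\mathbb{R}$, the projection $P_S(z)$ is the (possibly empty or multi-valued) set $\operatorname{argmin}_{w\in S}\|w-z\|$, where the norm is the $\beta$-weighted norm $\|(u,v,\gamma)\|=\sqrt{\|u\|^2+\|v\|^2+\beta^2|\gamma|^2}$. *)

theory Defs
  imports "HOL-Analysis.Analysis"
begin

definition bnorm :: "real \<Rightarrow> ('a::real_normed_vector) \<times> 'a \<times> real \<Rightarrow> real" where
  "bnorm \<beta> w = (case w of (u, v, \<gamma>) \<Rightarrow> sqrt (norm u ^ 2 + norm v ^ 2 + \<beta>^2 * \<bar>\<gamma>\<bar>^2))"

definition bdist :: "real \<Rightarrow> ('a::real_normed_vector) \<times> 'a \<times> real \<Rightarrow> 'a \<times> 'a \<times> real \<Rightarrow> real" where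
  "bdist \<beta> w z = (case w of (u, v, \<gamma>) \<Rightarrow> case z of (u', v', \<gamma>') \<Rightarrow> bnorm \<beta> (u - u', v - v', \<gamma> - \<gamma>'))"

definition bproj :: "real \<Rightarrow> (('a::real_normed_vector) \<times> 'a \<times> real) set \<Rightarrow> 'a \<times> 'a \<times> real \<Rightarrow> ('a \<times> 'a \<times> real) set" where
  "bproj \<beta> S z = {w \<in> S. \<forall>w'\<in>S. bdist \<beta> w z \<le> bdist \<beta> w' z}"

definition Ctilde :: "real \<Rightarrow> (('a::real_normed_vector) \<times> 'a \<times> real) set" where
  "Ctilde \<alpha> = {(u, v, \<gamma>). norm u ^ 2 - norm v ^ 2 = 2 * \<alpha> * \<gamma>}"

definition gfun :: "real \<Rightarrow> real \<Rightarrow> real \<Rightarrow> real \<Rightarrow> real \<Rightarrow> real \<Rightarrow> real" where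
  "gfun p q \<alpha> \<beta> \<gamma>0 lam =
     ((lam^2 + 1) * p - 2 * lam * q) / (1 - lam^2)^2 - 2 * lam * \<alpha>^2 / \<beta>^2 - 2 * \<alpha> * \<gamma>0"

definition g1fun :: "real \<Rightarrow> real \<Rightarrow> real \<Rightarrow> real \<Rightarrow> real \<Rightarrow> real" where
  "g1fun nv \<alpha> \<beta> \<gamma>0 lam = nv^2 / (1 - lam)^2 + 2 * lam * \<alpha>^2 / \<beta>^2 + 2 * \<alpha> * \<gamma>0"

definition g2fun :: "real \<Rightarrow> real \<Rightarrow> real \<Rightarrow> real \<Rightarrow> real \<Rightarrow> real" where
  "g2fun nu \<alpha> \<beta> \<gamma>0 lam = nu^2 / (1 + lam)^2 - 2 * lam * \<alpha>^2 / \<beta>^2 - 2 * \<alpha> * \<gamma>0"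

end

theory Submission
  imports Defs
begin

(*
  For a multiplier l in [-1, 1], adding l * (|u|^2 - |v|^2 - 2 alpha gamma), which vanishes on
  C~_alpha, to the squared weighted distance from z = (u0, v0, gamma0) and completing squares gives
    const + (1 + l) |u - u0/(1+l)|^2 + (1 - l) |v - v0/(1-l)|^2 + beta^2 (gamma - gamma0 - l alpha/beta^2)^2.
  The variable part is nonnegative, so as soon as it vanishes somewhere on C~_alpha the projection
  is exactly its zero set on C~_alpha.  For |l| < 1 that zero set is at most the Lagrange point
  (u0/(1+l), v0/(1-l), gamma0 + l alpha/beta^2), which lies on C~_alpha iff l is a root of g; the
  root functions are strictly monotone on ]-1,1[ and blow up at the relevant endpoints, which gives
  exactly one root.  When u0 = 0 and no interior root exists, l = -1 leaves u free on a sphere; the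
  case v0 = 0 is the mirror image under the isometry (u, v, gamma) |-> (v, u, -gamma) of C~_alpha.
  For u0 = v0 = 0 and |alpha gamma0| <= alpha^2/beta^2 the multiplier l = -gamma0 beta^2/alpha puts
  the Lagrange point at the origin.
*)

lemma bdist_sq:
  "(bdist \<beta> (u, v, \<gamma>) (u0, v0, \<gamma>0))\<^sup>2 = (norm (u - u0))\<^sup>2 + (norm (v - v0))\<^sup>2 + \<beta>\<^sup>2 * (\<gamma> - \<gamma>0)\<^sup>2"
  unfolding bdist_def bnorm_def by (simp add: power2_abs)

lemma bproj_eq_zero_set:
  assumes dist: "\<And>w. w \<in> S \<Longrightarrow> (bdist \<beta> w z)\<^sup>2 = M + Q w"
    and nonneg: "\<And>w. w \<in> S \<Longrightarrow> 0 \<le> Q w"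
    and zero: "w0 \<in> S" "Q w0 = 0"
  shows "bproj \<beta> S z = {w \<in> S. Q w = 0}"
proof -
  have "bdist \<beta> w z = sqrt (M + Q w)" if "w \<in> S" for w
    using dist[OF that] unfolding bdist_def bnorm_def by (auto split: prod.splits)
  then have le_iff: "bdist \<beta> w z \<le> bdist \<beta> w' z \<longleftrightarrow> Q w \<le> Q w'" if "w \<in> S" "w' \<in> S" for w w'
    using that by simp
  show ?thesis
  proof (intro set_eqI iffI)
    fix w
    assume "w \<in> bproj \<beta> S z"
    then have "w \<in> S" "bdist \<beta> w z \<le> bdist \<beta> w0 z"
      using zero(1) unfolding bproj_def by blast+
    then have "Q w \<le> Q w0"
      using le_iff zero(1) by blast
    with \<open>w \<in> S\<close> show "w \<in> {w \<in> S. Q w = 0}"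
      using nonneg[of w] zero(2) by simp
  next
    fix w
    assume "w \<in> {w \<in> S. Q w = 0}"
    then have "w \<in> S" "Q w = 0" by simp_all
    then have "\<forall>w'\<in>S. bdist \<beta> w z \<le> bdist \<beta> w' z"
      using le_iff nonneg by metis
    with \<open>w \<in> S\<close> show "w \<in> bproj \<beta> S z"
      unfolding bproj_def by blast
  qed
qed

lemma mem_Ctilde: "(u, v, \<gamma>) \<in> Ctilde \<alpha> \<longleftrightarrow> (norm u)\<^sup>2 - (norm v)\<^sup>2 = 2 * \<alpha> * \<gamma>"
  by (simp add: Ctilde_def)

lemma norm_scaleR_inverse_sq: "(norm (x /\<^sub>R c))\<^sup>2 = (norm x)\<^sup>2 / c\<^sup>2"
  by (simp add: power_divide power_mult_distrib power_inverse divide_inverse)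

lemma norm_diff_sq_complete_square:
  fixes u u0 :: "'a::real_inner"
  assumes "l = -1 \<Longrightarrow> u0 = 0"
  shows "(norm (u - u0))\<^sup>2 + l * (norm u)\<^sup>2
       = (1 + l) * (norm (u - u0 /\<^sub>R (1 + l)))\<^sup>2 + ((norm u0)\<^sup>2 - (norm u0)\<^sup>2 / (1 + l))"
proof (cases "l = -1")
  case False
  define c where "c = 1 + l"
  have "c \<noteq> 0" using False by (auto simp: c_def)
  moreover have expand: "(norm (x - y))\<^sup>2 = (norm x)\<^sup>2 - 2 * (x \<bullet> y) + (norm y)\<^sup>2" for x y :: 'a
    using dot_norm_neg[of x y] by simp
  ultimately show ?thesis
    unfolding expand c_def[symmetric]
    by (simp add: power_divide power_mult_distrib field_simps power2_eq_square)
       (simp add: c_def algebra_simps)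
qed (use assms in simp)

(* At l = -1 (l = 1) the first (second) summand vanishes whatever the junk value of the
   division by zero is. *)
definition lagrange_gap :: "real \<Rightarrow> real \<Rightarrow> real \<Rightarrow> ('a::real_normed_vector) \<times> 'a \<times> real \<Rightarrow> 'a \<times> 'a \<times> real \<Rightarrow> real" where
  "lagrange_gap \<alpha> \<beta> l z w = (case z of (u0, v0, \<gamma>0) \<Rightarrow> case w of (u, v, \<gamma>) \<Rightarrow>
     (1 + l) * (norm (u - u0 /\<^sub>R (1 + l)))\<^sup>2 + (1 - l) * (norm (v - v0 /\<^sub>R (1 - l)))\<^sup>2
     + \<beta>\<^sup>2 * (\<gamma> - (\<gamma>0 + l * \<alpha> / \<beta>\<^sup>2))\<^sup>2)"

lemma lagrange_gap_nonneg: "-1 \<le> l \<Longrightarrow> l \<le> 1 \<Longrightarrow> 0 \<le> lagrange_gap \<alpha> \<beta> l z w"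
  unfolding lagrange_gap_def by (auto split: prod.splits)

lemma bdist_sq_Ctilde:
  fixes u0 v0 :: "'a::real_inner"
  assumes "\<beta> \<noteq> 0" "l = -1 \<Longrightarrow> u0 = 0" "l = 1 \<Longrightarrow> v0 = 0"
  shows "\<exists>M. \<forall>w \<in> Ctilde \<alpha>. (bdist \<beta> w (u0, v0, \<gamma>0))\<^sup>2 = M + lagrange_gap \<alpha> \<beta> l (u0, v0, \<gamma>0) w"
proof -
  define M where "M = ((norm u0)\<^sup>2 - (norm u0)\<^sup>2 / (1 + l)) + ((norm v0)\<^sup>2 - (norm v0)\<^sup>2 / (1 - l))
    + (\<beta>\<^sup>2 * \<gamma>0\<^sup>2 - \<beta>\<^sup>2 * (\<gamma>0 + l * \<alpha> / \<beta>\<^sup>2)\<^sup>2)"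
  have "(bdist \<beta> w (u0, v0, \<gamma>0))\<^sup>2 = M + lagrange_gap \<alpha> \<beta> l (u0, v0, \<gamma>0) w"
    if w_C: "w \<in> Ctilde \<alpha>" for w :: "'a \<times> 'a \<times> real"
  proof -
    obtain u v \<gamma> where w: "w = (u, v, \<gamma>)" and C: "(norm u)\<^sup>2 - (norm v)\<^sup>2 = 2 * \<alpha> * \<gamma>"
      using w_C unfolding Ctilde_def by auto
    have "(norm (u - u0))\<^sup>2 + l * (norm u)\<^sup>2
        = (1 + l) * (norm (u - u0 /\<^sub>R (1 + l)))\<^sup>2 + ((norm u0)\<^sup>2 - (norm u0)\<^sup>2 / (1 + l))"
      using norm_diff_sq_complete_square assms(2) .
    moreover have "(norm (v - v0))\<^sup>2 + (- l) * (norm v)\<^sup>2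
        = (1 - l) * (norm (v - v0 /\<^sub>R (1 - l)))\<^sup>2 + ((norm v0)\<^sup>2 - (norm v0)\<^sup>2 / (1 - l))"
      using norm_diff_sq_complete_square[of "- l" v0 v] assms(3) by simp
    moreover have "\<beta>\<^sup>2 * (\<gamma> - \<gamma>0)\<^sup>2 - 2 * l * \<alpha> * \<gamma>
        = \<beta>\<^sup>2 * (\<gamma> - (\<gamma>0 + l * \<alpha> / \<beta>\<^sup>2))\<^sup>2 + (\<beta>\<^sup>2 * \<gamma>0\<^sup>2 - \<beta>\<^sup>2 * (\<gamma>0 + l * \<alpha> / \<beta>\<^sup>2)\<^sup>2)"
      using assms(1) by (simp add: field_simps power2_eq_square)
    moreover have "(bdist \<beta> w (u0, v0, \<gamma>0))\<^sup>2
      = ((norm (u - u0))\<^sup>2 + l * (norm u)\<^sup>2) + ((norm (v - v0))\<^sup>2 + (- l) * (norm v)\<^sup>2)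
        + (\<beta>\<^sup>2 * (\<gamma> - \<gamma>0)\<^sup>2 - 2 * l * \<alpha> * \<gamma>)"
      unfolding w bdist_sq using C by (simp add: algebra_simps)
    ultimately show ?thesis
      unfolding w lagrange_gap_def M_def by simp
  qed
  then show ?thesis
    by blast
qed

lemma bproj_Ctilde_eq_gap_zeros:
  fixes u0 v0 :: "'a::real_inner"
  assumes "\<beta> \<noteq> 0" "-1 \<le> l" "l \<le> 1" "l = -1 \<Longrightarrow> u0 = 0" "l = 1 \<Longrightarrow> v0 = 0"
    and "w0 \<in> Ctilde \<alpha>" "lagrange_gap \<alpha> \<beta> l (u0, v0, \<gamma>0) w0 = 0"
  shows "bproj \<beta> (Ctilde \<alpha>) (u0, v0, \<gamma>0) = {w \<in> Ctilde \<alpha>. lagrange_gap \<alpha> \<beta> l (u0, v0, \<gamma>0) w = 0}"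
proof -
  obtain M where dist: "\<And>w. w \<in> Ctilde \<alpha> \<Longrightarrow>
      (bdist \<beta> w (u0, v0, \<gamma>0))\<^sup>2 = M + lagrange_gap \<alpha> \<beta> l (u0, v0, \<gamma>0) w"
    using bdist_sq_Ctilde[OF assms(1,4,5)] by blast
  show ?thesis
    by (rule bproj_eq_zero_set[OF dist lagrange_gap_nonneg[OF assms(2,3)] assms(6,7)])
qed

lemma bproj_Ctilde_interior:
  fixes u0 v0 :: "'a::real_inner"
  assumes "\<beta> \<noteq> 0" "-1 < l" "l < 1"
    and "(u0 /\<^sub>R (1 + l), v0 /\<^sub>R (1 - l), \<gamma>0 + l * \<alpha> / \<beta>\<^sup>2) \<in> Ctilde \<alpha>"
  shows "bproj \<beta> (Ctilde \<alpha>) (u0, v0, \<gamma>0) = {(u0 /\<^sub>R (1 + l), v0 /\<^sub>R (1 - l), \<gamma>0 + l * \<alpha> / \<beta>\<^sup>2)}"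
proof -
  have gap_zero_iff: "lagrange_gap \<alpha> \<beta> l (u0, v0, \<gamma>0) w = 0 \<longleftrightarrow>
      w = (u0 /\<^sub>R (1 + l), v0 /\<^sub>R (1 - l), \<gamma>0 + l * \<alpha> / \<beta>\<^sup>2)" for w :: "'a \<times> 'a \<times> real"
    using assms(1-3) by (auto simp: lagrange_gap_def add_nonneg_eq_0_iff split: prod.splits)
  have "bproj \<beta> (Ctilde \<alpha>) (u0, v0, \<gamma>0) = {w \<in> Ctilde \<alpha>. lagrange_gap \<alpha> \<beta> l (u0, v0, \<gamma>0) w = 0}"
    by (rule bproj_Ctilde_eq_gap_zeros[OF assms(1) _ _ _ _ assms(4)]) (use assms(2,3) gap_zero_iff in auto)
  with assms(4) show ?thesis
    unfolding gap_zero_iff by auto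
qed

lemma ex_norm_eq:
  assumes "\<exists>x::'a. x \<noteq> 0" "0 \<le> r"
  obtains x :: "'a::real_normed_vector" where "norm x = r"
proof -
  obtain x :: 'a where "x \<noteq> 0" using assms(1) by blast
  then have "norm ((r / norm x) *\<^sub>R x) = r" using assms(2) by simp
  then show ?thesis using that by blast
qed

lemma singleton_norm_level_iff:
  fixes f :: "'a::real_normed_vector \<Rightarrow> 'b"
  assumes "inj f" "\<exists>x::'a. x \<noteq> 0" "0 \<le> R"
  shows "(\<exists>w. {f u | u. norm u = sqrt R} = {w}) \<longleftrightarrow> R = 0"
proof
  assume "\<exists>w. {f u | u. norm u = sqrt R} = {w}"
  then obtain w where w: "{f u | u. norm u = sqrt R} = {w}" by blast
  obtain x :: 'a where x: "norm x = sqrt R"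
    by (rule ex_norm_eq[OF assms(2) real_sqrt_ge_zero[OF assms(3)]])
  then have "f x \<in> {w}" "f (- x) \<in> {w}" unfolding w[symmetric] by auto
  then have "x = - x" using \<open>inj f\<close> by (auto dest: injD)
  then show "R = 0" using x by (simp add: eq_neg_iff_add_eq_0 flip: scaleR_2)
next
  assume "R = 0"
  then have "{f u | u. norm u = sqrt R} = {f 0}" by auto
  then show "\<exists>w. {f u | u. norm u = sqrt R} = {w}" by blast
qed

lemma bproj_Ctilde_u_sphere:
  fixes v0 :: "'a::real_inner"
  assumes "\<exists>x::'a. x \<noteq> 0" "\<beta> \<noteq> 0" and R: "0 \<le> 2 * \<alpha> * (\<gamma>0 - \<alpha> / \<beta>\<^sup>2) + (norm v0)\<^sup>2 / 4"
  shows "bproj \<beta> (Ctilde \<alpha>) (0, v0, \<gamma>0) = {(u, v0 /\<^sub>R 2, \<gamma>0 - \<alpha> / \<beta>\<^sup>2) | u.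
           norm u = sqrt (2 * \<alpha> * (\<gamma>0 - \<alpha> / \<beta>\<^sup>2) + (norm v0)\<^sup>2 / 4)}"
proof -
  let ?R = "2 * \<alpha> * (\<gamma>0 - \<alpha> / \<beta>\<^sup>2) + (norm v0)\<^sup>2 / 4"
  have gap_zero_iff: "lagrange_gap \<alpha> \<beta> (-1) (0, v0, \<gamma>0) (u, v, \<gamma>) = 0 \<longleftrightarrow>
      v = v0 /\<^sub>R 2 \<and> \<gamma> = \<gamma>0 - \<alpha> / \<beta>\<^sup>2" for u v :: 'a and \<gamma>
    using assms(2) by (simp add: lagrange_gap_def add_nonneg_eq_0_iff)
  have on_Ctilde: "(u, v0 /\<^sub>R 2, \<gamma>0 - \<alpha> / \<beta>\<^sup>2) \<in> Ctilde \<alpha> \<longleftrightarrow> norm u = sqrt ?R" for u :: 'a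
  proof -
    have "(u, v0 /\<^sub>R 2, \<gamma>0 - \<alpha> / \<beta>\<^sup>2) \<in> Ctilde \<alpha> \<longleftrightarrow> (norm u)\<^sup>2 = ?R"
      by (auto simp: Ctilde_def power_divide algebra_simps)
    also have "\<dots> \<longleftrightarrow> norm u = sqrt ?R"
      using R by (auto simp: real_sqrt_unique)
    finally show ?thesis .
  qed
  have zero_set: "{w \<in> Ctilde \<alpha>. lagrange_gap \<alpha> \<beta> (-1) (0, v0, \<gamma>0) w = 0}
      = {(u, v0 /\<^sub>R 2, \<gamma>0 - \<alpha> / \<beta>\<^sup>2) | u. norm u = sqrt ?R}"
  proof (intro set_eqI iffI)
    fix w :: "'a \<times> 'a \<times> real"
    assume w: "w \<in> {w \<in> Ctilde \<alpha>. lagrange_gap \<alpha> \<beta> (-1) (0, v0, \<gamma>0) w = 0}"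
    obtain u v \<gamma> where uv\<gamma>: "w = (u, v, \<gamma>)" by (rule prod_cases3)
    have "v = v0 /\<^sub>R 2" "\<gamma> = \<gamma>0 - \<alpha> / \<beta>\<^sup>2"
      using w gap_zero_iff unfolding uv\<gamma> by simp_all
    moreover have "norm u = sqrt ?R"
      using w on_Ctilde unfolding uv\<gamma> calculation by simp
    ultimately show "w \<in> {(u, v0 /\<^sub>R 2, \<gamma>0 - \<alpha> / \<beta>\<^sup>2) | u. norm u = sqrt ?R}"
      unfolding uv\<gamma> by simp
  next
    fix w :: "'a \<times> 'a \<times> real"
    assume "w \<in> {(u, v0 /\<^sub>R 2, \<gamma>0 - \<alpha> / \<beta>\<^sup>2) | u. norm u = sqrt ?R}"
    then obtain u where w: "w = (u, v0 /\<^sub>R 2, \<gamma>0 - \<alpha> / \<beta>\<^sup>2)" and u: "norm u = sqrt ?R"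
      by blast
    have "w \<in> Ctilde \<alpha>"
      unfolding w using u by (rule on_Ctilde[THEN iffD2])
    moreover have "lagrange_gap \<alpha> \<beta> (-1) (0, v0, \<gamma>0) w = 0"
      unfolding w by (rule gap_zero_iff[THEN iffD2]) simp
    ultimately show "w \<in> {w \<in> Ctilde \<alpha>. lagrange_gap \<alpha> \<beta> (-1) (0, v0, \<gamma>0) w = 0}"
      by blast
  qed
  obtain u1 :: 'a where "norm u1 = sqrt ?R"
    by (rule ex_norm_eq[OF assms(1) real_sqrt_ge_zero[OF R]])
  then have "(u1, v0 /\<^sub>R 2, \<gamma>0 - \<alpha> / \<beta>\<^sup>2) \<in> {w \<in> Ctilde \<alpha>. lagrange_gap \<alpha> \<beta> (-1) (0, v0, \<gamma>0) w = 0}"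
    unfolding zero_set by blast
  then show ?thesis
    unfolding zero_set[symmetric] by (intro bproj_Ctilde_eq_gap_zeros[OF assms(2)]) auto
qed

lemma lagrange_gap_eq_0_origin:
  fixes w :: "'a::real_inner \<times> 'a \<times> real"
  assumes "\<beta> \<noteq> 0" "-1 \<le> l" "l \<le> 1" "\<gamma>0 + l * \<alpha> / \<beta>\<^sup>2 = 0" "w \<in> Ctilde \<alpha>"
  shows "lagrange_gap \<alpha> \<beta> l (0, 0, \<gamma>0) w = 0 \<longleftrightarrow> w = (0, 0, 0)"
proof
  obtain u v \<gamma> where w: "w = (u, v, \<gamma>)" and C: "(norm u)\<^sup>2 - (norm v)\<^sup>2 = 2 * \<alpha> * \<gamma>"
    using assms(5) unfolding Ctilde_def by auto
  assume "lagrange_gap \<alpha> \<beta> l (0, 0, \<gamma>0) w = 0"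
  then have "(1 + l) * (norm u)\<^sup>2 + (1 - l) * (norm v)\<^sup>2 + \<beta>\<^sup>2 * \<gamma>\<^sup>2 = 0"
    by (simp add: w lagrange_gap_def assms(4))
  moreover have "0 \<le> (1 + l) * (norm u)\<^sup>2" "0 \<le> (1 - l) * (norm v)\<^sup>2" "0 \<le> \<beta>\<^sup>2 * \<gamma>\<^sup>2"
    using assms(2,3) by auto
  ultimately have uv: "(1 + l) * (norm u)\<^sup>2 + (1 - l) * (norm v)\<^sup>2 = 0" and "\<beta>\<^sup>2 * \<gamma>\<^sup>2 = 0"
    by linarith+
  then have "\<gamma> = 0"
    using assms(1) by simp
  with C have "(norm v)\<^sup>2 = (norm u)\<^sup>2"
    by simp
  with uv have "(norm u)\<^sup>2 = 0"
    by (simp add: algebra_simps)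
  with \<open>(norm v)\<^sup>2 = (norm u)\<^sup>2\<close> \<open>\<gamma> = 0\<close> show "w = (0, 0, 0)"
    unfolding w by simp
next
  assume "w = (0, 0, 0)"
  have "lagrange_gap \<alpha> \<beta> l (0, 0, \<gamma>0) ((0::'a), (0::'a), \<gamma>0 + l * \<alpha> / \<beta>\<^sup>2) = 0"
    by (simp add: lagrange_gap_def)
  then show "lagrange_gap \<alpha> \<beta> l (0, 0, \<gamma>0) w = 0"
    unfolding \<open>w = (0, 0, 0)\<close> assms(4) .
qed

lemma bproj_Ctilde_origin:
  assumes "\<beta> \<noteq> 0" "\<alpha> \<noteq> 0" "\<bar>\<alpha> * \<gamma>0\<bar> \<le> \<alpha>\<^sup>2 / \<beta>\<^sup>2"
  shows "bproj \<beta> (Ctilde \<alpha> :: ('a::real_inner \<times> 'a \<times> real) set) (0, 0, \<gamma>0) = {(0, 0, 0)}"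
proof -
  \<comment> \<open>This multiplier puts the Lagrange point at the origin; the hypothesis says exactly \<open>\<bar>l\<bar> \<le> 1\<close>.\<close>
  define l where "l = - (\<alpha> * \<gamma>0) * (\<beta>\<^sup>2 / \<alpha>\<^sup>2)"
  have centre: "\<gamma>0 + l * \<alpha> / \<beta>\<^sup>2 = 0"
    using assms(1,2) by (simp add: l_def field_simps power2_eq_square)
  have "\<bar>l\<bar> = \<bar>\<alpha> * \<gamma>0\<bar> * (\<beta>\<^sup>2 / \<alpha>\<^sup>2)"
    by (simp add: l_def abs_mult)
  also have "\<dots> \<le> \<alpha>\<^sup>2 / \<beta>\<^sup>2 * (\<beta>\<^sup>2 / \<alpha>\<^sup>2)"
    by (rule mult_right_mono[OF assms(3)]) simp
  also have "\<dots> = 1"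
    using assms(1,2) by simp
  finally have l: "-1 \<le> l" "l \<le> 1"
    by auto
  have origin: "((0::'a), (0::'a), 0::real) \<in> Ctilde \<alpha>"
    by (simp add: Ctilde_def)
  note zero_iff = lagrange_gap_eq_0_origin[OF assms(1) l centre]
  have "bproj \<beta> (Ctilde \<alpha>) ((0::'a), 0, \<gamma>0) = {w \<in> Ctilde \<alpha>. lagrange_gap \<alpha> \<beta> l (0, 0, \<gamma>0) w = 0}"
    by (rule bproj_Ctilde_eq_gap_zeros[OF assms(1) l _ _ origin]) (simp_all add: zero_iff[OF origin])
  also have "\<dots> = {(0, 0, 0)}"
    using zero_iff origin by blast
  finally show ?thesis .
qed

definition mirror :: "('a \<times> 'a \<times> real) \<Rightarrow> 'a \<times> 'a \<times> real" where
  "mirror w = (case w of (u, v, \<gamma>) \<Rightarrow> (v, u, - \<gamma>))"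

lemma mirror_mirror [simp]: "mirror (mirror w) = w"
  by (simp add: mirror_def split: prod.splits)

lemma mirror_in_Ctilde_iff [simp]: "mirror w \<in> Ctilde \<alpha> \<longleftrightarrow> w \<in> Ctilde \<alpha>"
  by (auto simp: mirror_def Ctilde_def split: prod.splits)

lemma bdist_mirror [simp]: "bdist \<beta> (mirror w) (mirror z) = bdist \<beta> w z"
  by (auto simp: mirror_def bdist_def bnorm_def power2_commute split: prod.splits)

lemma image_mirror: "mirror ` A = {w. mirror w \<in> A}"
  by (auto simp: image_iff) (metis mirror_mirror)

lemma bproj_Ctilde_mirror: "bproj \<beta> (Ctilde \<alpha>) (mirror z) = mirror ` bproj \<beta> (Ctilde \<alpha>) z"
proof -
  have reindex: "(\<forall>w'\<in>Ctilde \<alpha>. P (mirror w')) \<longleftrightarrow> (\<forall>w'\<in>Ctilde \<alpha>. P w')" for P :: "_ \<Rightarrow> bool"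
    by (metis mirror_in_Ctilde_iff mirror_mirror)
  have "w \<in> bproj \<beta> (Ctilde \<alpha>) (mirror z) \<longleftrightarrow> mirror w \<in> bproj \<beta> (Ctilde \<alpha>) z" for w
    using reindex[of "\<lambda>w'. bdist \<beta> (mirror w) z \<le> bdist \<beta> w' z"] bdist_mirror[of \<beta> _ "mirror z"]
    unfolding bproj_def by simp
  then show ?thesis
    unfolding image_mirror by blast
qed

lemma bproj_Ctilde_v_sphere:
  fixes u0 :: "'a::real_inner"
  assumes "\<exists>x::'a. x \<noteq> 0" "\<beta> \<noteq> 0" and R: "0 \<le> - 2 * \<alpha> * (\<gamma>0 + \<alpha> / \<beta>\<^sup>2) + (norm u0)\<^sup>2 / 4"
  shows "bproj \<beta> (Ctilde \<alpha>) (u0, 0, \<gamma>0) = {(u0 /\<^sub>R 2, v, \<gamma>0 + \<alpha> / \<beta>\<^sup>2) | v.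
           norm v = sqrt (- 2 * \<alpha> * (\<gamma>0 + \<alpha> / \<beta>\<^sup>2) + (norm u0)\<^sup>2 / 4)}"
proof -
  have R_eq: "2 * \<alpha> * (- \<gamma>0 - \<alpha> / \<beta>\<^sup>2) = - 2 * \<alpha> * (\<gamma>0 + \<alpha> / \<beta>\<^sup>2)"
    by (simp add: algebra_simps)
  have "bproj \<beta> (Ctilde \<alpha>) (u0, 0, \<gamma>0) = mirror ` bproj \<beta> (Ctilde \<alpha>) (0, u0, - \<gamma>0)"
    using bproj_Ctilde_mirror[of \<beta> \<alpha> "(0, u0, - \<gamma>0)"] by (simp add: mirror_def)
  also have "\<dots> = mirror ` {(v, u0 /\<^sub>R 2, - \<gamma>0 - \<alpha> / \<beta>\<^sup>2) | v.
           norm v = sqrt (- 2 * \<alpha> * (\<gamma>0 + \<alpha> / \<beta>\<^sup>2) + (norm u0)\<^sup>2 / 4)}"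
    using bproj_Ctilde_u_sphere[OF assms(1,2), of \<alpha> "- \<gamma>0" u0] R unfolding R_eq by simp
  also have "\<dots> = {(u0 /\<^sub>R 2, v, \<gamma>0 + \<alpha> / \<beta>\<^sup>2) | v.
           norm v = sqrt (- 2 * \<alpha> * (\<gamma>0 + \<alpha> / \<beta>\<^sup>2) + (norm u0)\<^sup>2 / 4)}"
    by (auto simp: mirror_def image_iff)
  finally show ?thesis .
qed

lemma ex_inverse_square_gt:
  fixes c K :: real
  assumes "c > 0"
  shows "\<exists>t. 0 < t \<and> t < 1 \<and> K < c / t\<^sup>2"
proof (intro exI conjI)
  define t where "t = min (1/2) (c / (\<bar>K\<bar> + 1))"
  show "0 < t" "t < 1" using assms by (auto simp: t_def)
  have "t \<le> c / (\<bar>K\<bar> + 1)"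
    by (simp add: t_def)
  then have "t * (\<bar>K\<bar> + 1) \<le> c"
    by (simp add: pos_le_divide_eq)
  then have "\<bar>K\<bar> + 1 \<le> c / t"
    using \<open>0 < t\<close> by (simp add: le_divide_eq mult.commute)
  also have "\<dots> \<le> c / t\<^sup>2"
    using assms \<open>0 < t\<close> \<open>t < 1\<close> by (simp add: power2_eq_square frac_le)
  finally show "K < c / t\<^sup>2" by linarith
qed

lemma strict_mono_on_ex1_zero:
  fixes f :: "real \<Rightarrow> real"
  assumes mono: "strict_mono_on {c<..<d} f" and "c \<le> a" "a < b" "b \<le> d"
    and "f a < 0" "0 < f b" "continuous_on {a..b} f"
  shows "\<exists>!t. t \<in> {c<..<d} \<and> f t = 0"
proof -
  have "\<exists>t. a \<le> t \<and> t \<le> b \<and> f t = 0"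
    by (rule IVT') (use assms in auto)
  then obtain t where "a \<le> t" "t \<le> b" "f t = 0"
    by blast
  moreover from this have "t \<noteq> a" "t \<noteq> b"
    using assms(5,6) by auto
  ultimately have t: "t \<in> {c<..<d}" "f t = 0"
    using assms(2,4) by auto
  show ?thesis
  proof (rule ex1I[of _ t])
    fix l
    assume "l \<in> {c<..<d} \<and> f l = 0"
    then show "l = t"
      using strict_mono_on_eqD[OF mono, of l t] t by simp
  qed (use t in simp)
qed

lemma div_square_le_self: "0 \<le> (c::real) \<Longrightarrow> 1 \<le> x \<Longrightarrow> c / x\<^sup>2 \<le> c"
  using divide_left_mono[of 1 "x\<^sup>2" c] by (simp add: one_le_power)

lemma div_square_strict_antimono: "0 < (c::real) \<Longrightarrow> 0 < x \<Longrightarrow> x < y \<Longrightarrow> c / y\<^sup>2 < c / x\<^sup>2"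
  by (simp add: divide_strict_left_mono power_strict_mono)

lemma strict_mono_on_inverse_square_diff:
  fixes a b k c :: real
  assumes "0 < b" "0 \<le> k"
  shows "strict_mono_on {-1<..<1} (\<lambda>l. b\<^sup>2 / (1 - l)\<^sup>2 - a\<^sup>2 / (1 + l)\<^sup>2 + 2 * l * k + c)"
proof (rule strict_mono_onI)
  fix x y :: real
  assume "x \<in> {-1<..<1}" "y \<in> {-1<..<1}" "x < y"
  moreover from this have "a\<^sup>2 / (1 + y)\<^sup>2 \<le> a\<^sup>2 / (1 + x)\<^sup>2"
    by (cases "a = 0") (auto intro!: less_imp_le[OF div_square_strict_antimono])
  ultimately have "b\<^sup>2 / (1 - x)\<^sup>2 < b\<^sup>2 / (1 - y)\<^sup>2" "a\<^sup>2 / (1 + y)\<^sup>2 \<le> a\<^sup>2 / (1 + x)\<^sup>2"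
      "2 * x * k \<le> 2 * y * k"
    using assms by (auto intro!: div_square_strict_antimono mult_right_mono)
  then show "b\<^sup>2 / (1 - x)\<^sup>2 - a\<^sup>2 / (1 + x)\<^sup>2 + 2 * x * k + c < b\<^sup>2 / (1 - y)\<^sup>2 - a\<^sup>2 / (1 + y)\<^sup>2 + 2 * y * k + c"
    by linarith
qed

lemma gfun_eq:
  assumes "-1 < l" "l < 1"
  shows "gfun (a\<^sup>2 - b\<^sup>2) (a\<^sup>2 + b\<^sup>2) \<alpha> \<beta> \<gamma>0 l
       = a\<^sup>2 / (1 + l)\<^sup>2 - b\<^sup>2 / (1 - l)\<^sup>2 - 2 * l * \<alpha>\<^sup>2 / \<beta>\<^sup>2 - 2 * \<alpha> * \<gamma>0"
proof -
  have "(1 - l\<^sup>2)\<^sup>2 = (1 + l)\<^sup>2 * (1 - l)\<^sup>2"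
    by (simp add: power2_eq_square algebra_simps)
  moreover have "(l\<^sup>2 + 1) * (a\<^sup>2 - b\<^sup>2) - 2 * l * (a\<^sup>2 + b\<^sup>2) = a\<^sup>2 * (1 - l)\<^sup>2 - b\<^sup>2 * (1 + l)\<^sup>2"
    by (simp add: power2_eq_square algebra_simps)
  ultimately show ?thesis
    using assms by (simp add: gfun_def diff_divide_distrib)
qed

lemma lagrange_point_in_Ctilde_iff:
  fixes u0 v0 :: "'a::real_inner"
  assumes "-1 < l" "l < 1"
  shows "(u0 /\<^sub>R (1 + l), v0 /\<^sub>R (1 - l), \<gamma>0 + l * \<alpha> / \<beta>\<^sup>2) \<in> Ctilde \<alpha> \<longleftrightarrow>
         gfun ((norm u0)\<^sup>2 - (norm v0)\<^sup>2) ((norm u0)\<^sup>2 + (norm v0)\<^sup>2) \<alpha> \<beta> \<gamma>0 l = 0"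
proof -
  have "2 * \<alpha> * (\<gamma>0 + l * \<alpha> / \<beta>\<^sup>2) = 2 * l * \<alpha>\<^sup>2 / \<beta>\<^sup>2 + 2 * \<alpha> * \<gamma>0"
    by (simp add: power2_eq_square algebra_simps)
  then show ?thesis
    unfolding gfun_eq[OF assms] mem_Ctilde norm_scaleR_inverse_sq by linarith
qed

lemma gfun_ex1_root:
  fixes a b :: real
  assumes "0 < a" "0 < b"
  shows "\<exists>!l. l \<in> {-1<..<1} \<and> gfun (a\<^sup>2 - b\<^sup>2) (a\<^sup>2 + b\<^sup>2) \<alpha> \<beta> \<gamma>0 l = 0"
proof -
  define h where "h l = b\<^sup>2 / (1 - l)\<^sup>2 - a\<^sup>2 / (1 + l)\<^sup>2 + 2 * l * (\<alpha>\<^sup>2 / \<beta>\<^sup>2) + 2 * \<alpha> * \<gamma>0" for l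
  obtain t where t: "0 < t" "t < 1" "b\<^sup>2 + 2 * \<alpha> * \<gamma>0 < a\<^sup>2 / t\<^sup>2"
    using ex_inverse_square_gt[of "a\<^sup>2"] assms(1) by auto
  obtain s where s: "0 < s" "s < 1" "a\<^sup>2 - 2 * \<alpha> * \<gamma>0 < b\<^sup>2 / s\<^sup>2"
    using ex_inverse_square_gt[of "b\<^sup>2"] assms(2) by auto
  have "strict_mono_on {-1<..<1} h"
    unfolding h_def[abs_def] using assms(2) by (intro strict_mono_on_inverse_square_diff) auto
  moreover have "h (t - 1) < 0"
  proof -
    have "b\<^sup>2 / (1 - (t - 1))\<^sup>2 \<le> b\<^sup>2"
      using t by (intro div_square_le_self) auto
    moreover have "2 * (t - 1) * (\<alpha>\<^sup>2 / \<beta>\<^sup>2) \<le> 0"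
      by (rule mult_nonpos_nonneg) (use t in auto)
    ultimately show ?thesis
      using t(3) unfolding h_def by simp
  qed
  moreover have "0 < h (1 - s)"
  proof -
    have "a\<^sup>2 / (1 + (1 - s))\<^sup>2 \<le> a\<^sup>2"
      using s by (intro div_square_le_self) auto
    moreover have "0 \<le> 2 * (1 - s) * (\<alpha>\<^sup>2 / \<beta>\<^sup>2)"
      using s by simp
    moreover have "b\<^sup>2 / (1 - (1 - s))\<^sup>2 = b\<^sup>2 / s\<^sup>2"
      by simp
    ultimately show ?thesis
      using s(3) unfolding h_def by linarith
  qed
  moreover have "continuous_on {t - 1..1 - s} h"
    using t s unfolding h_def by (intro continuous_intros) auto
  ultimately have "\<exists>!l. l \<in> {-1<..<1} \<and> h l = 0"
    using t s by (intro strict_mono_on_ex1_zero) auto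
  moreover have "gfun (a\<^sup>2 - b\<^sup>2) (a\<^sup>2 + b\<^sup>2) \<alpha> \<beta> \<gamma>0 l = - h l" if "l \<in> {-1<..<1}" for l
    using that gfun_eq by (simp add: h_def)
  ultimately show ?thesis
    by (simp cong: conj_cong)
qed

lemma g1fun_ex1_root:
  fixes b :: real
  assumes "0 < b" and below: "\<alpha> * (\<gamma>0 - \<alpha> / \<beta>\<^sup>2) < - b\<^sup>2 / 8"
  shows "\<exists>!l. l \<in> {-1<..<1} \<and> g1fun b \<alpha> \<beta> \<gamma>0 l = 0"
proof -
  define h where "h l = b\<^sup>2 / (1 - l)\<^sup>2 + 2 * l * (\<alpha>\<^sup>2 / \<beta>\<^sup>2) + 2 * \<alpha> * \<gamma>0" for l
  obtain s where s: "0 < s" "s < 1" "- 2 * \<alpha> * \<gamma>0 < b\<^sup>2 / s\<^sup>2"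
    using ex_inverse_square_gt[of "b\<^sup>2"] assms(1) by auto
  have "strict_mono_on {-1<..<1} h"
    using strict_mono_on_inverse_square_diff[OF assms(1), of "\<alpha>\<^sup>2 / \<beta>\<^sup>2" 0 "2 * \<alpha> * \<gamma>0"]
    by (simp add: h_def[abs_def])
  moreover have "h (-1) < 0"
  proof -
    have "h (-1) = 2 * (\<alpha> * (\<gamma>0 - \<alpha> / \<beta>\<^sup>2)) + b\<^sup>2 / 4"
      by (simp add: h_def power2_eq_square algebra_simps)
    with below show ?thesis by linarith
  qed
  moreover have "0 < h (1 - s)"
  proof -
    have "0 \<le> 2 * (1 - s) * (\<alpha>\<^sup>2 / \<beta>\<^sup>2)"
      using s by simp
    moreover have "b\<^sup>2 / (1 - (1 - s))\<^sup>2 = b\<^sup>2 / s\<^sup>2"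
      by simp
    ultimately show ?thesis
      using s(3) unfolding h_def by linarith
  qed
  moreover have "continuous_on {-1..1 - s} h"
    using s unfolding h_def by (intro continuous_intros) auto
  ultimately have "\<exists>!l. l \<in> {-1<..<1} \<and> h l = 0"
    using s by (intro strict_mono_on_ex1_zero) auto
  moreover have "g1fun b \<alpha> \<beta> \<gamma>0 = h"
    by (simp add: fun_eq_iff g1fun_def h_def)
  ultimately show ?thesis
    by simp
qed

lemma ex1_Ioo_reflect:
  fixes c :: real
  assumes "\<exists>!l. l \<in> {-c<..<c} \<and> P l"
  shows "\<exists>!l. l \<in> {-c<..<c} \<and> P (- l)"
proof -
  obtain m where m: "m \<in> {-c<..<c}" "P m" and unique: "\<And>l. l \<in> {-c<..<c} \<and> P l \<Longrightarrow> l = m"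
    using assms by (elim ex1E) blast
  show ?thesis
  proof (rule ex1I[of _ "- m"])
    fix l
    assume "l \<in> {-c<..<c} \<and> P (- l)"
    then have "- l = m"
      by (intro unique) auto
    then show "l = - m"
      by simp
  qed (use m in auto)
qed

lemma g2fun_ex1_root:
  fixes a :: real
  assumes "0 < a" "a\<^sup>2 / 8 < \<alpha> * (\<gamma>0 + \<alpha> / \<beta>\<^sup>2)"
  shows "\<exists>!l. l \<in> {-1<..<1} \<and> g2fun a \<alpha> \<beta> \<gamma>0 l = 0"
proof -
  have "\<alpha> * (- \<gamma>0 - \<alpha> / \<beta>\<^sup>2) < - a\<^sup>2 / 8"
    using assms(2) by (simp add: algebra_simps)
  then have "\<exists>!l. l \<in> {-1<..<1} \<and> g1fun a \<alpha> \<beta> (- \<gamma>0) l = 0"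
    by (rule g1fun_ex1_root[OF assms(1)])
  then have "\<exists>!l. l \<in> {-1<..<1} \<and> g1fun a \<alpha> \<beta> (- \<gamma>0) (- l) = 0"
    by (rule ex1_Ioo_reflect)
  moreover have "g1fun a \<alpha> \<beta> (- \<gamma>0) (- l) = g2fun a \<alpha> \<beta> \<gamma>0 l" for l
    by (simp add: g1fun_def g2fun_def)
  ultimately show ?thesis
    by simp
qed

lemma bproj_Ctilde_both_nonzero:
  fixes u0 v0 :: "'a::real_inner"
  assumes "\<beta> \<noteq> 0" "u0 \<noteq> 0" "v0 \<noteq> 0"
  shows "let p = norm u0 ^ 2 - norm v0 ^ 2; q = norm u0 ^ 2 + norm v0 ^ 2 in
        (\<exists>!lam. lam \<in> {-1<..<1} \<and> gfun p q \<alpha> \<beta> \<gamma>0 lam = 0) \<and>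
        (\<forall>lam. lam \<in> {-1<..<1} \<and> gfun p q \<alpha> \<beta> \<gamma>0 lam = 0 \<longrightarrow>
           bproj \<beta> (Ctilde \<alpha>) (u0, v0, \<gamma>0) = {(u0 /\<^sub>R (1 + lam), v0 /\<^sub>R (1 - lam), \<gamma>0 + lam * \<alpha> / \<beta>^2)})"
proof -
  have "\<exists>!l. l \<in> {-1<..<1} \<and> gfun ((norm u0)\<^sup>2 - (norm v0)\<^sup>2) ((norm u0)\<^sup>2 + (norm v0)\<^sup>2) \<alpha> \<beta> \<gamma>0 l = 0"
    using assms(2,3) by (intro gfun_ex1_root) auto
  moreover have "bproj \<beta> (Ctilde \<alpha>) (u0, v0, \<gamma>0) = {(u0 /\<^sub>R (1 + l), v0 /\<^sub>R (1 - l), \<gamma>0 + l * \<alpha> / \<beta>\<^sup>2)}"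
    if "l \<in> {-1<..<1}" "gfun ((norm u0)\<^sup>2 - (norm v0)\<^sup>2) ((norm u0)\<^sup>2 + (norm v0)\<^sup>2) \<alpha> \<beta> \<gamma>0 l = 0" for l
    using that assms(1) lagrange_point_in_Ctilde_iff[of l u0 v0] by (intro bproj_Ctilde_interior) auto
  ultimately show ?thesis
    unfolding Let_def by blast
qed

lemma bproj_Ctilde_u0_zero:
  fixes v0 :: "'a::real_inner"
  assumes nontriv: "\<exists>x::'a. x \<noteq> 0" and \<beta>: "\<beta> \<noteq> 0" and "v0 \<noteq> 0"
  shows "(\<alpha> * (\<gamma>0 - \<alpha> / \<beta>^2) < - (norm v0 ^ 2) / 8 \<longrightarrow>
         (\<exists>!lam. lam \<in> {-1<..<1} \<and> g1fun (norm v0) \<alpha> \<beta> \<gamma>0 lam = 0) \<and>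
         (\<forall>lam. lam \<in> {-1<..<1} \<and> g1fun (norm v0) \<alpha> \<beta> \<gamma>0 lam = 0 \<longrightarrow>
            bproj \<beta> (Ctilde \<alpha>) (0, v0, \<gamma>0) = {(0, v0 /\<^sub>R (1 - lam), \<gamma>0 + lam * \<alpha> / \<beta>^2)}))
      \<and>
      (\<alpha> * (\<gamma>0 - \<alpha> / \<beta>^2) \<ge> - (norm v0 ^ 2) / 8 \<longrightarrow>
         bproj \<beta> (Ctilde \<alpha>) (0, v0, \<gamma>0) = {(u, v0 /\<^sub>R 2, \<gamma>0 - \<alpha> / \<beta>^2) | u.
              norm u = sqrt (2 * \<alpha> * (\<gamma>0 - \<alpha> / \<beta>^2) + norm v0 ^ 2 / 4)}
         \<and> ((\<exists>w. bproj \<beta> (Ctilde \<alpha>) (0, v0, \<gamma>0) = {w}) \<longleftrightarrow> \<alpha> * (\<gamma>0 - \<alpha> / \<beta>^2) = - (norm v0 ^ 2) / 8))"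
proof (intro conjI impI allI)
  assume "\<alpha> * (\<gamma>0 - \<alpha> / \<beta>\<^sup>2) < - (norm v0)\<^sup>2 / 8"
  then show "\<exists>!l. l \<in> {-1<..<1} \<and> g1fun (norm v0) \<alpha> \<beta> \<gamma>0 l = 0"
    using assms(3) by (intro g1fun_ex1_root) auto
next
  fix l
  assume l: "l \<in> {-1<..<1} \<and> g1fun (norm v0) \<alpha> \<beta> \<gamma>0 l = 0"
  then have "(0 /\<^sub>R (1 + l), v0 /\<^sub>R (1 - l), \<gamma>0 + l * \<alpha> / \<beta>\<^sup>2) \<in> Ctilde \<alpha>"
    using lagrange_point_in_Ctilde_iff[of l 0 v0] gfun_eq[of l 0 "norm v0"] by (simp add: g1fun_def)
  with l \<beta> show "bproj \<beta> (Ctilde \<alpha>) (0, v0, \<gamma>0) = {(0, v0 /\<^sub>R (1 - l), \<gamma>0 + l * \<alpha> / \<beta>\<^sup>2)}"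
    using bproj_Ctilde_interior[of \<beta> l 0 v0] by simp
next
  assume "- (norm v0)\<^sup>2 / 8 \<le> \<alpha> * (\<gamma>0 - \<alpha> / \<beta>\<^sup>2)"
  then have R: "0 \<le> 2 * \<alpha> * (\<gamma>0 - \<alpha> / \<beta>\<^sup>2) + (norm v0)\<^sup>2 / 4"
    by linarith
  note sphere = bproj_Ctilde_u_sphere[OF nontriv \<beta> R]
  then show "bproj \<beta> (Ctilde \<alpha>) (0, v0, \<gamma>0) = {(u, v0 /\<^sub>R 2, \<gamma>0 - \<alpha> / \<beta>\<^sup>2) | u.
      norm u = sqrt (2 * \<alpha> * (\<gamma>0 - \<alpha> / \<beta>\<^sup>2) + (norm v0)\<^sup>2 / 4)}" .
  have "inj (\<lambda>u::'a. (u, v0 /\<^sub>R 2, \<gamma>0 - \<alpha> / \<beta>\<^sup>2))"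
    by (simp add: inj_on_def)
  then have "(\<exists>w. bproj \<beta> (Ctilde \<alpha>) (0, v0, \<gamma>0) = {w}) \<longleftrightarrow> 2 * \<alpha> * (\<gamma>0 - \<alpha> / \<beta>\<^sup>2) + (norm v0)\<^sup>2 / 4 = 0"
    unfolding sphere by (rule singleton_norm_level_iff[OF _ nontriv R])
  also have "\<dots> \<longleftrightarrow> \<alpha> * (\<gamma>0 - \<alpha> / \<beta>\<^sup>2) = - (norm v0)\<^sup>2 / 8"
    by linarith
  finally show "(\<exists>w. bproj \<beta> (Ctilde \<alpha>) (0, v0, \<gamma>0) = {w}) \<longleftrightarrow> \<alpha> * (\<gamma>0 - \<alpha> / \<beta>\<^sup>2) = - (norm v0)\<^sup>2 / 8" .
qed

lemma bproj_Ctilde_v0_zero: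
  fixes u0 :: "'a::real_inner"
  assumes nontriv: "\<exists>x::'a. x \<noteq> 0" and \<beta>: "\<beta> \<noteq> 0" and "u0 \<noteq> 0"
  shows "(\<alpha> * (\<gamma>0 + \<alpha> / \<beta>^2) > norm u0 ^ 2 / 8 \<longrightarrow>
         (\<exists>!lam. lam \<in> {-1<..<1} \<and> g2fun (norm u0) \<alpha> \<beta> \<gamma>0 lam = 0) \<and>
         (\<forall>lam. lam \<in> {-1<..<1} \<and> g2fun (norm u0) \<alpha> \<beta> \<gamma>0 lam = 0 \<longrightarrow>
            bproj \<beta> (Ctilde \<alpha>) (u0, 0, \<gamma>0) = {(u0 /\<^sub>R (1 + lam), 0, \<gamma>0 + lam * \<alpha> / \<beta>^2)}))
      \<and>
      (\<alpha> * (\<gamma>0 + \<alpha> / \<beta>^2) \<le> norm u0 ^ 2 / 8 \<longrightarrow>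
         bproj \<beta> (Ctilde \<alpha>) (u0, 0, \<gamma>0) = {(u0 /\<^sub>R 2, v, \<gamma>0 + \<alpha> / \<beta>^2) | v.
              norm v = sqrt (- 2 * \<alpha> * (\<gamma>0 + \<alpha> / \<beta>^2) + norm u0 ^ 2 / 4)}
         \<and> ((\<exists>w. bproj \<beta> (Ctilde \<alpha>) (u0, 0, \<gamma>0) = {w}) \<longleftrightarrow> \<alpha> * (\<gamma>0 + \<alpha> / \<beta>^2) = norm u0 ^ 2 / 8))"
proof (intro conjI impI allI)
  assume "(norm u0)\<^sup>2 / 8 < \<alpha> * (\<gamma>0 + \<alpha> / \<beta>\<^sup>2)"
  then show "\<exists>!l. l \<in> {-1<..<1} \<and> g2fun (norm u0) \<alpha> \<beta> \<gamma>0 l = 0"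
    using assms(3) by (intro g2fun_ex1_root) auto
next
  fix l
  assume l: "l \<in> {-1<..<1} \<and> g2fun (norm u0) \<alpha> \<beta> \<gamma>0 l = 0"
  then have "(u0 /\<^sub>R (1 + l), 0 /\<^sub>R (1 - l), \<gamma>0 + l * \<alpha> / \<beta>\<^sup>2) \<in> Ctilde \<alpha>"
    using lagrange_point_in_Ctilde_iff[of l u0 0] gfun_eq[of l "norm u0" 0] by (simp add: g2fun_def)
  with l \<beta> show "bproj \<beta> (Ctilde \<alpha>) (u0, 0, \<gamma>0) = {(u0 /\<^sub>R (1 + l), 0, \<gamma>0 + l * \<alpha> / \<beta>\<^sup>2)}"
    using bproj_Ctilde_interior[of \<beta> l u0 0] by simp
next
  assume "\<alpha> * (\<gamma>0 + \<alpha> / \<beta>\<^sup>2) \<le> (norm u0)\<^sup>2 / 8"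
  then have R: "0 \<le> - 2 * \<alpha> * (\<gamma>0 + \<alpha> / \<beta>\<^sup>2) + (norm u0)\<^sup>2 / 4"
    by linarith
  note sphere = bproj_Ctilde_v_sphere[OF nontriv \<beta> R]
  then show "bproj \<beta> (Ctilde \<alpha>) (u0, 0, \<gamma>0) = {(u0 /\<^sub>R 2, v, \<gamma>0 + \<alpha> / \<beta>\<^sup>2) | v.
      norm v = sqrt (- 2 * \<alpha> * (\<gamma>0 + \<alpha> / \<beta>\<^sup>2) + (norm u0)\<^sup>2 / 4)}" .
  have "inj (\<lambda>v::'a. (u0 /\<^sub>R 2, v, \<gamma>0 + \<alpha> / \<beta>\<^sup>2))"
    by (simp add: inj_on_def)
  then have "(\<exists>w. bproj \<beta> (Ctilde \<alpha>) (u0, 0, \<gamma>0) = {w}) \<longleftrightarrow> - 2 * \<alpha> * (\<gamma>0 + \<alpha> / \<beta>\<^sup>2) + (norm u0)\<^sup>2 / 4 = 0"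
    unfolding sphere by (rule singleton_norm_level_iff[OF _ nontriv R])
  also have "\<dots> \<longleftrightarrow> \<alpha> * (\<gamma>0 + \<alpha> / \<beta>\<^sup>2) = (norm u0)\<^sup>2 / 8"
    by linarith
  finally show "(\<exists>w. bproj \<beta> (Ctilde \<alpha>) (u0, 0, \<gamma>0) = {w}) \<longleftrightarrow> \<alpha> * (\<gamma>0 + \<alpha> / \<beta>\<^sup>2) = (norm u0)\<^sup>2 / 8" .
qed

lemma bproj_Ctilde_both_zero:
  assumes nontriv: "\<exists>x::'a::real_inner. x \<noteq> 0" and \<beta>: "\<beta> \<noteq> 0" and "\<alpha> \<noteq> 0"
  shows "(\<alpha> * \<gamma>0 > \<alpha>^2 / \<beta>^2 \<longrightarrow>
         bproj \<beta> (Ctilde \<alpha> :: ('a \<times> 'a \<times> real) set) (0, 0, \<gamma>0) = {(u, 0, \<gamma>0 - \<alpha> / \<beta>^2) | u.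
              norm u = sqrt (2 * \<alpha> * (\<gamma>0 - \<alpha> / \<beta>^2))}
         \<and> \<not> (\<exists>w. bproj \<beta> (Ctilde \<alpha> :: ('a \<times> 'a \<times> real) set) (0, 0, \<gamma>0) = {w}))
      \<and>
      (\<bar>\<alpha> * \<gamma>0\<bar> \<le> \<alpha>^2 / \<beta>^2 \<longrightarrow> bproj \<beta> (Ctilde \<alpha> :: ('a \<times> 'a \<times> real) set) (0, 0, \<gamma>0) = {(0, 0, 0)})
      \<and>
      (\<alpha> * \<gamma>0 < - (\<alpha>^2 / \<beta>^2) \<longrightarrow>
         bproj \<beta> (Ctilde \<alpha> :: ('a \<times> 'a \<times> real) set) (0, 0, \<gamma>0) = {(0, v, \<gamma>0 + \<alpha> / \<beta>^2) | v.
              norm v = sqrt (- 2 * \<alpha> * (\<gamma>0 + \<alpha> / \<beta>^2))}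
         \<and> \<not> (\<exists>w. bproj \<beta> (Ctilde \<alpha> :: ('a \<times> 'a \<times> real) set) (0, 0, \<gamma>0) = {w}))"
proof (intro conjI impI)
  have shift: "\<alpha> * (\<alpha> / \<beta>\<^sup>2) = \<alpha>\<^sup>2 / \<beta>\<^sup>2"
    by (simp add: power2_eq_square)
  {
    assume "\<alpha>\<^sup>2 / \<beta>\<^sup>2 < \<alpha> * \<gamma>0"
    then have R: "0 < 2 * \<alpha> * (\<gamma>0 - \<alpha> / \<beta>\<^sup>2)"
      unfolding right_diff_distrib mult.assoc shift by simp
    have sphere: "bproj \<beta> (Ctilde \<alpha> :: ('a \<times> 'a \<times> real) set) (0, 0, \<gamma>0)
        = {(u, 0, \<gamma>0 - \<alpha> / \<beta>\<^sup>2) | u. norm u = sqrt (2 * \<alpha> * (\<gamma>0 - \<alpha> / \<beta>\<^sup>2))}"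
      using bproj_Ctilde_u_sphere[OF nontriv \<beta>, of \<alpha> \<gamma>0 0] R by simp
    then show "bproj \<beta> (Ctilde \<alpha> :: ('a \<times> 'a \<times> real) set) (0, 0, \<gamma>0)
        = {(u, 0, \<gamma>0 - \<alpha> / \<beta>\<^sup>2) | u. norm u = sqrt (2 * \<alpha> * (\<gamma>0 - \<alpha> / \<beta>\<^sup>2))}" .
    have "inj (\<lambda>u::'a. (u, 0::'a, \<gamma>0 - \<alpha> / \<beta>\<^sup>2))"
      by (simp add: inj_on_def)
    then have "(\<exists>w. {(u, 0::'a, \<gamma>0 - \<alpha> / \<beta>\<^sup>2) | u::'a. norm u = sqrt (2 * \<alpha> * (\<gamma>0 - \<alpha> / \<beta>\<^sup>2))} = {w}) \<longleftrightarrow> 2 * \<alpha> * (\<gamma>0 - \<alpha> / \<beta>\<^sup>2) = 0"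
      by (rule singleton_norm_level_iff[OF _ nontriv less_imp_le[OF R]])
    with R show "\<not> (\<exists>w. bproj \<beta> (Ctilde \<alpha> :: ('a \<times> 'a \<times> real) set) (0, 0, \<gamma>0) = {w})"
      unfolding sphere by (metis less_irrefl)
  }
  show "\<bar>\<alpha> * \<gamma>0\<bar> \<le> \<alpha>\<^sup>2 / \<beta>\<^sup>2 \<Longrightarrow> bproj \<beta> (Ctilde \<alpha> :: ('a \<times> 'a \<times> real) set) (0, 0, \<gamma>0) = {(0, 0, 0)}"
    using \<beta> assms(3) by (rule bproj_Ctilde_origin)
  {
    assume "\<alpha> * \<gamma>0 < - (\<alpha>\<^sup>2 / \<beta>\<^sup>2)"
    then have R: "0 < - 2 * \<alpha> * (\<gamma>0 + \<alpha> / \<beta>\<^sup>2)"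
      unfolding distrib_left mult.assoc shift by simp
    have sphere: "bproj \<beta> (Ctilde \<alpha> :: ('a \<times> 'a \<times> real) set) (0, 0, \<gamma>0)
        = {(0, v, \<gamma>0 + \<alpha> / \<beta>\<^sup>2) | v. norm v = sqrt (- 2 * \<alpha> * (\<gamma>0 + \<alpha> / \<beta>\<^sup>2))}"
      using bproj_Ctilde_v_sphere[OF nontriv \<beta>, of \<alpha> \<gamma>0 0] R by simp
    then show "bproj \<beta> (Ctilde \<alpha> :: ('a \<times> 'a \<times> real) set) (0, 0, \<gamma>0)
        = {(0, v, \<gamma>0 + \<alpha> / \<beta>\<^sup>2) | v. norm v = sqrt (- 2 * \<alpha> * (\<gamma>0 + \<alpha> / \<beta>\<^sup>2))}" .
    have "inj (\<lambda>v::'a. (0::'a, v, \<gamma>0 + \<alpha> / \<beta>\<^sup>2))"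
      by (simp add: inj_on_def)
    then have "(\<exists>w. {(0::'a, v, \<gamma>0 + \<alpha> / \<beta>\<^sup>2) | v::'a. norm v = sqrt (- 2 * \<alpha> * (\<gamma>0 + \<alpha> / \<beta>\<^sup>2))} = {w}) \<longleftrightarrow> - 2 * \<alpha> * (\<gamma>0 + \<alpha> / \<beta>\<^sup>2) = 0"
      by (rule singleton_norm_level_iff[OF _ nontriv less_imp_le[OF R]])
    with R show "\<not> (\<exists>w. bproj \<beta> (Ctilde \<alpha> :: ('a \<times> 'a \<times> real) set) (0, 0, \<gamma>0) = {w})"
      unfolding sphere by (metis less_irrefl)
  }
qed

theorem mainTheorem1:
  fixes u0 v0 :: "'a::{real_inner, complete_space}"
    and \<alpha> \<beta> \<gamma>0 :: real
  assumes nontriv: "\<exists>x::'a. x \<noteq> 0"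
    and \<alpha>: "\<alpha> \<noteq> 0" and \<beta>: "\<beta> > 0"
  defines "P \<equiv> bproj \<beta> (Ctilde \<alpha> :: ('a \<times> 'a \<times> real) set)"
  shows
   \<comment> \<open>(i)\<close>
   "(u0 \<noteq> 0 \<and> v0 \<noteq> 0 \<longrightarrow>
      (let p = norm u0 ^ 2 - norm v0 ^ 2; q = norm u0 ^ 2 + norm v0 ^ 2 in
        (\<exists>!lam. lam \<in> {-1<..<1} \<and> gfun p q \<alpha> \<beta> \<gamma>0 lam = 0) \<and>
        (\<forall>lam. lam \<in> {-1<..<1} \<and> gfun p q \<alpha> \<beta> \<gamma>0 lam = 0 \<longrightarrow>
           P (u0, v0, \<gamma>0) = {(u0 /\<^sub>R (1 + lam), v0 /\<^sub>R (1 - lam), \<gamma>0 + lam * \<alpha> / \<beta>^2)})))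
   \<and>
   \<comment> \<open>(ii)\<close>
   (u0 = 0 \<and> v0 \<noteq> 0 \<longrightarrow>
      (\<alpha> * (\<gamma>0 - \<alpha> / \<beta>^2) < - (norm v0 ^ 2) / 8 \<longrightarrow>
         (\<exists>!lam. lam \<in> {-1<..<1} \<and> g1fun (norm v0) \<alpha> \<beta> \<gamma>0 lam = 0) \<and>
         (\<forall>lam. lam \<in> {-1<..<1} \<and> g1fun (norm v0) \<alpha> \<beta> \<gamma>0 lam = 0 \<longrightarrow>
            P (0, v0, \<gamma>0) = {(0, v0 /\<^sub>R (1 - lam), \<gamma>0 + lam * \<alpha> / \<beta>^2)}))
      \<and>
      (\<alpha> * (\<gamma>0 - \<alpha> / \<beta>^2) \<ge> - (norm v0 ^ 2) / 8 \<longrightarrow>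
         P (0, v0, \<gamma>0) = {(u, v0 /\<^sub>R 2, \<gamma>0 - \<alpha> / \<beta>^2) | u.
              norm u = sqrt (2 * \<alpha> * (\<gamma>0 - \<alpha> / \<beta>^2) + norm v0 ^ 2 / 4)}
         \<and> ((\<exists>w. P (0, v0, \<gamma>0) = {w}) \<longleftrightarrow> \<alpha> * (\<gamma>0 - \<alpha> / \<beta>^2) = - (norm v0 ^ 2) / 8)))
   \<and>
   \<comment> \<open>(iii)\<close>
   (u0 \<noteq> 0 \<and> v0 = 0 \<longrightarrow>
      (\<alpha> * (\<gamma>0 + \<alpha> / \<beta>^2) > norm u0 ^ 2 / 8 \<longrightarrow>
         (\<exists>!lam. lam \<in> {-1<..<1} \<and> g2fun (norm u0) \<alpha> \<beta> \<gamma>0 lam = 0) \<and>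
         (\<forall>lam. lam \<in> {-1<..<1} \<and> g2fun (norm u0) \<alpha> \<beta> \<gamma>0 lam = 0 \<longrightarrow>
            P (u0, 0, \<gamma>0) = {(u0 /\<^sub>R (1 + lam), 0, \<gamma>0 + lam * \<alpha> / \<beta>^2)}))
      \<and>
      (\<alpha> * (\<gamma>0 + \<alpha> / \<beta>^2) \<le> norm u0 ^ 2 / 8 \<longrightarrow>
         P (u0, 0, \<gamma>0) = {(u0 /\<^sub>R 2, v, \<gamma>0 + \<alpha> / \<beta>^2) | v.
              norm v = sqrt (- 2 * \<alpha> * (\<gamma>0 + \<alpha> / \<beta>^2) + norm u0 ^ 2 / 4)}
         \<and> ((\<exists>w. P (u0, 0, \<gamma>0) = {w}) \<longleftrightarrow> \<alpha> * (\<gamma>0 + \<alpha> / \<beta>^2) = norm u0 ^ 2 / 8)))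
   \<and>
   \<comment> \<open>(iv)\<close>
   (u0 = 0 \<and> v0 = 0 \<longrightarrow>
      (\<alpha> * \<gamma>0 > \<alpha>^2 / \<beta>^2 \<longrightarrow>
         P (0, 0, \<gamma>0) = {(u, 0, \<gamma>0 - \<alpha> / \<beta>^2) | u.
              norm u = sqrt (2 * \<alpha> * (\<gamma>0 - \<alpha> / \<beta>^2))}
         \<and> \<not> (\<exists>w. P (0, 0, \<gamma>0) = {w}))
      \<and>
      (\<bar>\<alpha> * \<gamma>0\<bar> \<le> \<alpha>^2 / \<beta>^2 \<longrightarrow> P (0, 0, \<gamma>0) = {(0, 0, 0)})
      \<and>
      (\<alpha> * \<gamma>0 < - (\<alpha>^2 / \<beta>^2) \<longrightarrow>
         P (0, 0, \<gamma>0) = {(0, v, \<gamma>0 + \<alpha> / \<beta>^2) | v.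
              norm v = sqrt (- 2 * \<alpha> * (\<gamma>0 + \<alpha> / \<beta>^2))}
         \<and> \<not> (\<exists>w. P (0, 0, \<gamma>0) = {w})))"
proof -
  have \<beta>': "\<beta> \<noteq> 0"
    using \<beta> by simp
  show ?thesis
    unfolding P_def
    by (intro conjI; rule impI; elim conjE;
        rule bproj_Ctilde_both_nonzero[OF \<beta>'] bproj_Ctilde_u0_zero[OF nontriv \<beta>']
          bproj_Ctilde_v0_zero[OF nontriv \<beta>'] bproj_Ctilde_both_zero[OF nontriv \<beta>' \<alpha>];
        assumption)
qed

end
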